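(* Let $m\ge1$, $d\ge1$ and let $\mathcal{A}=\{A_0,\ldots,A_{m-1}\}$ be $d\times d$ real matrices with $\varrho(\mathcal{A})>0$. Let $V=\bigoplus_{i=0}^{2m-2}\mathbb{R}^d$, let $V_i\subseteq V$ be the subspace of vectors vanishing in every summand except possibly the $i$-th ($i=0,\ldots,2m-2$), and define linear maps $B_0,B_1\colon V\to V$ by \[B_0(v_0\oplus \cdots \oplus v_{2m-2}):=v_1 \oplus \cdots \oplus v_{2m-2} \oplus 0,\] \[B_1(v_0 \oplus \cdots \oplus v_{2m-2}):= 0 \oplus \cdots \oplus 0 \oplus A_0v_0 \oplus A_1v_1 \oplus \cdots \oplus A_{m-1}v_{m-1}\] (in the second formula the first $m-1$ summands are $0$, and $A_jv_j$ sits in summand $m-1+j$). Let $\mathcal{B}=\{B_0,B_1\}$ and let $x \in \Sigma_2^\omega$ be very weakly extremal for $\mathcal{B}$. Then there exists an integer $k \geq 0$ such that $y:=\sigma^kx$ is very weakly extremal for $\mathcal{B}$, and $B_{y_n}\cdots B_{y_1}V_{m-1} \neq \{0\}$ for every $n \geq 1$.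
   Context: $\Sigma_2=\{0,1\}$, $\Sigma_2^\omega$ is the set of infinite binary sequences $x=x_1x_2\cdots$, and $\sigma$ is the shift, $\sigma(x_1x_2x_3\cdots)=x_2x_3\cdots$. For a finite set $\mathcal{C}=\{C_0,\ldots,C_{r-1}\}$ of square real matrices (or linear maps of a Euclidean space), $\varrho(\mathcal{C})=\lim_{n\to\infty}\max\{\|C_{i_1}\cdots C_{i_n}\|^{1/n}\}$ is the joint spectral radius, with $\|\cdot\|$ the Euclidean operator norm (the summands of $V$ are mutually orthogonal). A sequence $x$ is very weakly extremal for $\mathcal{C}$ if $\limsup_{n\to\infty}\|C_{x_n}\cdots C_{x_1}\|^{1/n}=\varrho(\mathcal{C})$. *)

theory Defs
  imports "HOL-Analysis.Analysis"
begin

definition mat_opnorm :: "real^'d^'d \<Rightarrow> real" where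
  "mat_opnorm M = onorm (\<lambda>v. M *v v)"

definition mat_word_prod :: "(nat \<Rightarrow> real^'d^'d) \<Rightarrow> nat list \<Rightarrow> real^'d^'d" where
  "mat_word_prod A w = foldr (\<lambda>i M. A i ** M) w (mat 1)"

definition jsr_mat :: "nat \<Rightarrow> (nat \<Rightarrow> real^'d^'d) \<Rightarrow> real" where
  "jsr_mat m A = lim (\<lambda>n. Max ((\<lambda>w. root n (mat_opnorm (mat_word_prod A w)))
        ` {w. length w = n \<and> set w \<subseteq> {..<m}}))"

text \<open>Vectors of V are represented as functions nat => real^d vanishing outside {0..2m-2}.\<close>
definition Vsp :: "nat \<Rightarrow> (nat \<Rightarrow> real^'d) set" where
  "Vsp m = {v. \<forall>i. 2*m - 2 < i \<longrightarrow> v i = 0}"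

definition Vsub :: "nat \<Rightarrow> nat \<Rightarrow> (nat \<Rightarrow> real^'d) set" where
  "Vsub m i = {v \<in> Vsp m. \<forall>j. j \<noteq> i \<longrightarrow> v j = 0}"

definition Vnorm :: "nat \<Rightarrow> (nat \<Rightarrow> real^'d) \<Rightarrow> real" where
  "Vnorm m v = sqrt (\<Sum>i\<le>2*m-2. (norm (v i))\<^sup>2)"

definition Vopnorm :: "nat \<Rightarrow> ((nat \<Rightarrow> real^'d) \<Rightarrow> (nat \<Rightarrow> real^'d)) \<Rightarrow> real" where
  "Vopnorm m f = Sup ((\<lambda>v. Vnorm m (f v)) ` {v \<in> Vsp m. Vnorm m v \<le> 1})"

definition B0 :: "nat \<Rightarrow> (nat \<Rightarrow> real^'d) \<Rightarrow> (nat \<Rightarrow> real^'d)" where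
  "B0 m v = (\<lambda>i. if i < 2*m - 2 then v (i+1) else 0)"

definition B1 :: "nat \<Rightarrow> (nat \<Rightarrow> real^'d^'d) \<Rightarrow> (nat \<Rightarrow> real^'d) \<Rightarrow> (nat \<Rightarrow> real^'d)" where
  "B1 m A v = (\<lambda>i. if m - 1 \<le> i \<and> i \<le> 2*m - 2 then A (i - (m-1)) *v v (i - (m-1)) else 0)"

text \<open>B_b for a symbol b in Sigma_2 = {0,1}, encoded as bool (False = 0, True = 1).\<close>
definition Bmap :: "nat \<Rightarrow> (nat \<Rightarrow> real^'d^'d) \<Rightarrow> bool \<Rightarrow> (nat \<Rightarrow> real^'d) \<Rightarrow> (nat \<Rightarrow> real^'d)" where
  "Bmap m A b = (if b then B1 m A else B0 m)"

definition B_word_prod :: "nat \<Rightarrow> (nat \<Rightarrow> real^'d^'d) \<Rightarrow> bool list \<Rightarrow> (nat \<Rightarrow> real^'d) \<Rightarrow> (nat \<Rightarrow> real^'d)" where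
  "B_word_prod m A w = foldr (\<lambda>b f. Bmap m A b \<circ> f) w id"

definition jsr_B :: "nat \<Rightarrow> (nat \<Rightarrow> real^'d^'d) \<Rightarrow> real" where
  "jsr_B m A = lim (\<lambda>n. Max ((\<lambda>w. root n (Vopnorm m (B_word_prod m A w)))
        ` {w :: bool list. length w = n}))"

text \<open>x :: nat => bool, with x k the symbol x_{k+1}. seq_prod x n = B_{x_n} ... B_{x_1}.\<close>
fun seq_prod :: "nat \<Rightarrow> (nat \<Rightarrow> real^'d^'d) \<Rightarrow> (nat \<Rightarrow> bool) \<Rightarrow> nat \<Rightarrow> (nat \<Rightarrow> real^'d) \<Rightarrow> (nat \<Rightarrow> real^'d)" where
  "seq_prod m A x 0 = id"
| "seq_prod m A x (Suc n) = Bmap m A (x n) \<circ> seq_prod m A x n"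

definition shiftk :: "nat \<Rightarrow> (nat \<Rightarrow> bool) \<Rightarrow> (nat \<Rightarrow> bool)" where
  "shiftk k x = (\<lambda>i. x (i + k))"

definition very_weakly_extremal_B :: "nat \<Rightarrow> (nat \<Rightarrow> real^'d^'d) \<Rightarrow> (nat \<Rightarrow> bool) \<Rightarrow> bool" where
  "very_weakly_extremal_B m A x \<longleftrightarrow>
     limsup (\<lambda>n. ereal (root n (Vopnorm m (seq_prod m A x n)))) = ereal (jsr_B m A)"

end

theory Submission
  imports Defs
begin

text \<open>Each \<open>B\<close>-product maps every summand \<open>V_i\<close> into a single summand: \<open>B0\<close> moves the index
  down by one (killing \<open>V_0\<close>) and \<open>B1\<close> moves it up by \<open>m-1\<close> (killing \<open>V_i\<close> for \<open>i \<ge> m\<close>).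
  On \<open>V_(m-1)\<close> the products \<open>B0^j B1 B0^(m-1-j)\<close> act as \<open>A_j\<close>, whence
  \<open>\<rho>(B) \<ge> \<rho>(A)^(1/m) > 0\<close> (using Fekete's lemma for the limits). Very weak extremality
  then makes every product \<open>B_(x_n) \<cdots> B_(x_1)\<close> nonzero; the set of summands on which it
  is nonzero decreases with \<open>n\<close>, so some summand \<open>V_i\<close> survives forever. Along \<open>x\<close> its index
  never meets a killing step, which forces it to pass through \<open>m-1\<close> at some time \<open>k\<close>; and
  shifting by \<open>k\<close> does not change the exponential growth rate of the products.\<close>

section \<open>Submultiplicative sequences\<close>

lemma submultiplicative_power_bound:
  fixes M :: "nat \<Rightarrow> real"
  assumes nonneg: "\<And>n. 0 \<le> M n"
    and submult: "\<And>a b. a \<ge> 1 \<Longrightarrow> b \<ge> 1 \<Longrightarrow> M (a + b) \<le> M a * M b"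
    and "q \<ge> 1" "r \<ge> 1"
  shows "M (s * q + r) \<le> M q ^ s * M r"
proof (induction s)
  case 0
  then show ?case by simp
next
  case (Suc s)
  have "M (Suc s * q + r) = M (q + (s * q + r))" by (simp add: algebra_simps)
  also have "\<dots> \<le> M q * M (s * q + r)" using submult assms(3,4) by simp
  also have "\<dots> \<le> M q * (M q ^ s * M r)" using Suc nonneg by (simp add: mult_left_mono)
  finally show ?case by (simp add: algebra_simps)
qed

lemma submultiplicative_exponential_bound:
  fixes M :: "nat \<Rightarrow> real"
  assumes nonneg: "\<And>n. 0 \<le> M n"
    and submult: "\<And>a b. a \<ge> 1 \<Longrightarrow> b \<ge> 1 \<Longrightarrow> M (a + b) \<le> M a * M b"
    and q: "q \<ge> 1" "M q \<le> c ^ q" and c: "c > 0"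
  obtains K where "K > 0" "\<And>n. n \<ge> 1 \<Longrightarrow> M n \<le> c ^ n * K"
proof
  define K where "K = (\<Sum>r\<in>{1..q}. M r / c ^ r) + 1"
  show "K > 0" unfolding K_def using c nonneg by (intro add_nonneg_pos sum_nonneg) auto
  fix n :: nat assume n: "n \<ge> 1"
  define s where "s = (n - 1) div q"
  define r where "r = (n - 1) mod q + 1"
  have r: "r \<ge> 1" "r \<le> q" using q by (auto simp: r_def Suc_le_eq)
  have "(n - 1) div q * q + (n - 1) mod q = n - 1" by (rule div_mult_mod_eq)
  then have n_eq: "n = s * q + r" using n unfolding s_def r_def by linarith
  have "M n \<le> M q ^ s * M r"
    using submultiplicative_power_bound[of M, OF nonneg submult q(1) r(1)] n_eq by simp
  also have "\<dots> \<le> (c ^ q) ^ s * M r" using q nonneg by (intro mult_right_mono power_mono) auto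
  also have "\<dots> = c ^ n * (M r / c ^ r)"
  proof -
    have "c ^ n = (c ^ q) ^ s * c ^ r" by (simp add: n_eq power_add power_mult mult.commute)
    then show ?thesis using c by simp
  qed
  also have "\<dots> \<le> c ^ n * K"
  proof -
    have "M r / c ^ r \<le> (\<Sum>r\<in>{1..q}. M r / c ^ r)"
      using r c nonneg by (intro member_le_sum) auto
    then show ?thesis using c unfolding K_def by (intro mult_left_mono) auto
  qed
  finally show "M n \<le> c ^ n * K" .
qed

lemma fekete_submultiplicative:
  fixes M :: "nat \<Rightarrow> real"
  assumes nonneg: "\<And>n. 0 \<le> M n"
    and submult: "\<And>a b. a \<ge> 1 \<Longrightarrow> b \<ge> 1 \<Longrightarrow> M (a + b) \<le> M a * M b"
  defines "L \<equiv> Inf ((\<lambda>n. root n (M n)) ` {1..})"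
  shows "(\<lambda>n. root n (M n)) \<longlonglongrightarrow> L" and "\<And>n. n \<ge> 1 \<Longrightarrow> L \<le> root n (M n)"
proof -
  have bdd: "bdd_below ((\<lambda>n. root n (M n)) ` {1..})"
    by (rule bdd_belowI[of _ 0]) (auto simp: nonneg)
  show lower: "L \<le> root n (M n)" if "n \<ge> 1" for n
    unfolding L_def using that bdd by (intro cInf_lower) auto
  have L_nonneg: "0 \<le> L" unfolding L_def by (rule cInf_greatest) (auto simp: nonneg)
  show "(\<lambda>n. root n (M n)) \<longlonglongrightarrow> L"
  proof (rule order_tendstoI)
    fix a assume "a < L"
    then have "\<forall>n\<ge>1. a < root n (M n)" using lower less_le_trans by blast
    then show "\<forall>\<^sub>F n in sequentially. a < root n (M n)" unfolding eventually_sequentially by blast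
  next
    fix a assume "L < a"
    define c where "c = (L + a) / 2"
    have c: "L < c" "c < a" "0 < c" using \<open>L < a\<close> L_nonneg by (auto simp: c_def)
    have "Inf ((\<lambda>n. root n (M n)) ` {1..}) < c" using c unfolding L_def by simp
    then obtain q where q: "q \<ge> 1" "root q (M q) < c"
      by (subst (asm) cInf_less_iff) (use bdd in auto)
    have "M q = root q (M q) ^ q" using q nonneg by (simp add: real_root_pow_pos2)
    also have "\<dots> \<le> c ^ q" using q by (intro power_mono) (auto simp: nonneg)
    finally have "M q \<le> c ^ q" .
    with submultiplicative_exponential_bound[of M, OF nonneg submult q(1) _ c(3)]
    obtain K where K: "K > 0" "\<And>n. n \<ge> 1 \<Longrightarrow> M n \<le> c ^ n * K" by blast
    have "(\<lambda>n. root n K) \<longlonglongrightarrow> 1" using K(1) by (rule LIMSEQ_root_const)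
    moreover have "1 < a / c" using c by simp
    ultimately have "\<forall>\<^sub>F n in sequentially. root n K < a / c" by (rule order_tendstoD)
    then show "\<forall>\<^sub>F n in sequentially. root n (M n) < a"
      using eventually_ge_at_top[of 1]
    proof eventually_elim
      case (elim n)
      have "root n (M n) \<le> root n (c ^ n * K)" using K(2) elim by simp
      also have "\<dots> = c * root n K" using elim c K by (simp add: real_root_mult real_root_power_cancel)
      also have "\<dots> < a" using elim c by (simp add: field_simps)
      finally show ?case .
    qed
  qed
qed

definition word_max :: "('a list \<Rightarrow> real) \<Rightarrow> 'a set \<Rightarrow> nat \<Rightarrow> real" where
  "word_max N S n = Max (N ` {w. length w = n \<and> set w \<subseteq> S})"

lemma finite_words: "finite S \<Longrightarrow> finite {w. length w = n \<and> set w \<subseteq> S}"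
  using finite_lists_length_eq[of S n] by (simp add: conj_commute)

lemma replicate_in_words: "a \<in> S \<Longrightarrow> replicate n a \<in> {w. length w = n \<and> set w \<subseteq> S}"
  by auto

lemma word_max_ge:
  "finite S \<Longrightarrow> length w = n \<Longrightarrow> set w \<subseteq> S \<Longrightarrow> N w \<le> word_max N S n"
  unfolding word_max_def by (rule Max_ge) (auto intro: finite_imageI finite_words)

lemma word_max_nonneg:
  assumes "finite S" "S \<noteq> {}" "\<And>w. 0 \<le> N w"
  shows "0 \<le> word_max N S n"
proof -
  obtain a where "a \<in> S" using assms(2) by blast
  then have "N (replicate n a) \<le> word_max N S n" by (intro word_max_ge assms(1)) auto
  then show ?thesis using assms(3) order_trans by blast
qed

lemma word_max_submult:
  assumes S: "finite S" "S \<noteq> {}" and nonneg: "\<And>w. 0 \<le> N w"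
    and submult: "\<And>u w. set u \<subseteq> S \<Longrightarrow> set w \<subseteq> S \<Longrightarrow> N (u @ w) \<le> N u * N w"
  shows "word_max N S (a + b) \<le> word_max N S a * word_max N S b"
  unfolding word_max_def[of N S "a + b"]
proof (rule Max.boundedI)
  show "finite (N ` {w. length w = a + b \<and> set w \<subseteq> S})" by (intro finite_imageI finite_words S(1))
  obtain s where "s \<in> S" using S(2) by blast
  then show "N ` {w. length w = a + b \<and> set w \<subseteq> S} \<noteq> {}"
    using replicate_in_words[of s S "a + b"] by blast
next
  fix y assume "y \<in> N ` {w. length w = a + b \<and> set w \<subseteq> S}"
  then obtain w where w: "length w = a + b" "set w \<subseteq> S" "y = N w" by auto
  have "y \<le> N (take a w) * N (drop a w)"
    using w submult[of "take a w" "drop a w"] set_take_subset[of a w] set_drop_subset[of a w] by simp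
  also have "\<dots> \<le> word_max N S a * word_max N S b"
  proof (rule mult_mono)
    show "N (take a w) \<le> word_max N S a" "N (drop a w) \<le> word_max N S b"
      using w S(1) set_take_subset[of a w] set_drop_subset[of a w] by (auto intro!: word_max_ge)
    show "0 \<le> word_max N S a" using S nonneg by (rule word_max_nonneg)
    show "0 \<le> N (drop a w)" by (rule nonneg)
  qed
  finally show "y \<le> word_max N S a * word_max N S b" .
qed

lemma Max_root_words:
  assumes "finite S" "S \<noteq> {}"
  shows "Max ((\<lambda>w. root n (N w)) ` {w. length w = n \<and> set w \<subseteq> S}) = root n (word_max N S n)"
proof -
  have mono_root: "mono (root n)"
    by (cases "n = 0") (auto simp: mono_def intro: real_root_le_mono)
  obtain s where "s \<in> S" using assms(2) by blast
  then have "N ` {w. length w = n \<and> set w \<subseteq> S} \<noteq> {}" using replicate_in_words[of s S n] by blast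
  then show ?thesis unfolding word_max_def
    by (subst mono_Max_commute[OF mono_root finite_imageI[OF finite_words[OF assms(1)]]])
      (simp_all add: image_image)
qed

lemma word_max_fekete:
  assumes "finite S" "S \<noteq> {}" and "\<And>w. 0 \<le> N w"
    and "\<And>u w. set u \<subseteq> S \<Longrightarrow> set w \<subseteq> S \<Longrightarrow> N (u @ w) \<le> N u * N w"
  defines "L \<equiv> lim (\<lambda>n. root n (word_max N S n))"
  shows "(\<lambda>n. root n (word_max N S n)) \<longlonglongrightarrow> L" and "\<And>n. n \<ge> 1 \<Longrightarrow> L \<le> root n (word_max N S n)"
proof -
  have nonneg: "\<And>n. 0 \<le> word_max N S n" using word_max_nonneg assms(1-3) by blast
  have submult: "\<And>a b. word_max N S (a + b) \<le> word_max N S a * word_max N S b"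
    using word_max_submult assms(1-4) by blast
  note fekete = fekete_submultiplicative[of "word_max N S", OF nonneg submult]
  have "L = Inf ((\<lambda>n. root n (word_max N S n)) ` {1..})"
    unfolding L_def using fekete(1) by (rule limI)
  then show "(\<lambda>n. root n (word_max N S n)) \<longlonglongrightarrow> L" "\<And>n. n \<ge> 1 \<Longrightarrow> L \<le> root n (word_max N S n)"
    using fekete by simp_all
qed

section \<open>The space \<open>V\<close>\<close>

definition block :: "nat \<Rightarrow> real^'d \<Rightarrow> nat \<Rightarrow> real^'d" where
  "block i u = (\<lambda>j. if j = i then u else 0)"

definition bounded_linear_V :: "nat \<Rightarrow> ((nat \<Rightarrow> real^'d) \<Rightarrow> (nat \<Rightarrow> real^'d)) \<Rightarrow> bool" where
  "bounded_linear_V m f \<longleftrightarrow> (\<forall>v\<in>Vsp m. f v \<in> Vsp m) \<and>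
     (\<forall>v\<in>Vsp m. \<forall>w\<in>Vsp m. f (\<lambda>i. v i + w i) = (\<lambda>i. f v i + f w i)) \<and>
     (\<forall>c. \<forall>v\<in>Vsp m. f (\<lambda>i. c *\<^sub>R v i) = (\<lambda>i. c *\<^sub>R f v i)) \<and>
     (\<exists>C. \<forall>v\<in>Vsp m. Vnorm m (f v) \<le> C * Vnorm m v)"

lemma Vnorm_eq_L2_set: "Vnorm m v = L2_set (\<lambda>i. norm (v i)) {..2*m-2}"
  by (simp add: Vnorm_def L2_set_def)

lemma Vnorm_nonneg: "0 \<le> Vnorm m v"
  by (simp add: Vnorm_eq_L2_set)

lemma norm_le_Vnorm: "i \<le> 2*m-2 \<Longrightarrow> norm (v i) \<le> Vnorm m v"
  unfolding Vnorm_eq_L2_set by (rule member_le_L2_set) auto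

lemma Vnorm_le_sum: "Vnorm m v \<le> (\<Sum>i\<le>2*m-2. norm (v i))"
  unfolding Vnorm_eq_L2_set by (rule L2_set_le_sum) auto

lemma Vnorm_zero [simp]: "Vnorm m (\<lambda>_. 0) = 0"
  by (simp add: Vnorm_def)

lemma Vnorm_eq_0: "v \<in> Vsp m \<Longrightarrow> Vnorm m v = 0 \<longleftrightarrow> v = (\<lambda>_. 0)"
  unfolding Vnorm_eq_L2_set Vsp_def
  by (subst L2_set_eq_0_iff) (auto simp: fun_eq_iff not_le[symmetric])

lemma Vnorm_scaleR: "Vnorm m (\<lambda>i. c *\<^sub>R v i) = \<bar>c\<bar> * Vnorm m v"
  unfolding Vnorm_eq_L2_set by (simp add: L2_set_right_distrib)

lemma Vnorm_block:
  assumes "i \<le> 2*m-2"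
  shows "Vnorm m (block i u) = norm u"
proof -
  have "(\<Sum>j\<le>2*m-2. (norm (block i u j))\<^sup>2) = (\<Sum>j\<le>2*m-2. if j = i then (norm u)\<^sup>2 else 0)"
    by (rule sum.cong) (auto simp: block_def)
  then show ?thesis using assms by (simp add: Vnorm_def)
qed

lemma Vnorm_le_of_components:
  "(\<And>i. i \<le> 2*m-2 \<Longrightarrow> norm (v i) \<le> K) \<Longrightarrow> Vnorm m v \<le> real (Suc (2*m-2)) * K"
proof -
  assume "\<And>i. i \<le> 2*m-2 \<Longrightarrow> norm (v i) \<le> K"
  then have "(\<Sum>i\<le>2*m-2. norm (v i)) \<le> (\<Sum>i\<le>2*m-2. K)" by (intro sum_mono) auto
  then show ?thesis using Vnorm_le_sum[of m v] by (simp del: of_nat_Suc)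
qed

lemma block_in_Vsub: "i \<le> 2*m-2 \<Longrightarrow> block i u \<in> Vsub m i"
  by (auto simp: Vsub_def Vsp_def block_def)

lemma block_in_Vsp: "i \<le> 2*m-2 \<Longrightarrow> block i u \<in> Vsp m"
  using block_in_Vsub by (auto simp: Vsub_def)

lemma zero_in_Vsp: "(\<lambda>_. 0) \<in> Vsp m"
  by (simp add: Vsp_def)

lemma scaleR_in_Vsp: "v \<in> Vsp m \<Longrightarrow> (\<lambda>i. c *\<^sub>R v i) \<in> Vsp m"
  by (simp add: Vsp_def)

lemma bounded_linear_V_in_Vsp: "bounded_linear_V m f \<Longrightarrow> v \<in> Vsp m \<Longrightarrow> f v \<in> Vsp m"
  by (simp add: bounded_linear_V_def)

lemma bounded_linear_V_add:
  "bounded_linear_V m f \<Longrightarrow> v \<in> Vsp m \<Longrightarrow> w \<in> Vsp m \<Longrightarrow> f (\<lambda>i. v i + w i) = (\<lambda>i. f v i + f w i)"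
  by (simp add: bounded_linear_V_def)

lemma bounded_linear_V_scaleR:
  "bounded_linear_V m f \<Longrightarrow> v \<in> Vsp m \<Longrightarrow> f (\<lambda>i. c *\<^sub>R v i) = (\<lambda>i. c *\<^sub>R f v i)"
  by (simp add: bounded_linear_V_def)

lemma bounded_linear_V_zero:
  assumes "bounded_linear_V m f"
  shows "f (\<lambda>_. 0) = (\<lambda>_. 0)"
proof -
  have "f (\<lambda>i. 0 *\<^sub>R (\<lambda>_. 0) i) = (\<lambda>i. 0 *\<^sub>R f (\<lambda>_. 0) i)"
    by (rule bounded_linear_V_scaleR[OF assms zero_in_Vsp])
  then show ?thesis by simp
qed

lemma bounded_linear_V_id: "bounded_linear_V m id"
  unfolding bounded_linear_V_def by (auto intro!: exI[of _ 1])

lemma Vopnorm_bdd: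
  assumes "bounded_linear_V m f"
  shows "bdd_above ((\<lambda>v. Vnorm m (f v)) ` {v \<in> Vsp m. Vnorm m v \<le> 1})"
proof -
  obtain C where C: "\<And>v. v \<in> Vsp m \<Longrightarrow> Vnorm m (f v) \<le> C * Vnorm m v"
    using assms unfolding bounded_linear_V_def by blast
  have "Vnorm m (f v) \<le> max C 0" if "v \<in> Vsp m" "Vnorm m v \<le> 1" for v
  proof -
    have "C * Vnorm m v \<le> max C 0 * Vnorm m v" using Vnorm_nonneg by (intro mult_right_mono) auto
    also have "\<dots> \<le> max C 0" using that by (simp add: mult_left_le)
    finally show ?thesis using C that(1) by (meson order_trans)
  qed
  then show ?thesis by (intro bdd_aboveI[of _ "max C 0"]) auto
qed

lemma Vnorm_le_Vopnorm:
  "bounded_linear_V m f \<Longrightarrow> v \<in> Vsp m \<Longrightarrow> Vnorm m v \<le> 1 \<Longrightarrow> Vnorm m (f v) \<le> Vopnorm m f"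
  unfolding Vopnorm_def by (rule cSup_upper) (auto dest: Vopnorm_bdd)

lemma Vopnorm_nonneg: "bounded_linear_V m f \<Longrightarrow> 0 \<le> Vopnorm m f"
  using Vnorm_le_Vopnorm[OF _ zero_in_Vsp, of m f] Vnorm_nonneg[of m "f (\<lambda>_. 0)"] by simp

lemma Vopnorm_bound:
  assumes f: "bounded_linear_V m f" and v: "v \<in> Vsp m"
  shows "Vnorm m (f v) \<le> Vopnorm m f * Vnorm m v"
proof (cases "Vnorm m v = 0")
  case True
  then have "v = (\<lambda>_. 0)" using v Vnorm_eq_0 by blast
  then show ?thesis using bounded_linear_V_zero[OF f] by simp
next
  case False
  define t where "t = Vnorm m v"
  have t: "t > 0" using False Vnorm_nonneg[of m v] by (simp add: t_def)
  define w where "w = (\<lambda>i. (1/t) *\<^sub>R v i)"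
  have w: "w \<in> Vsp m" "Vnorm m w = 1"
    using v t by (auto simp: w_def scaleR_in_Vsp Vnorm_scaleR t_def)
  have "(1/t) * Vnorm m (f v) = Vnorm m (f w)"
    using bounded_linear_V_scaleR[OF f v] t by (simp add: w_def Vnorm_scaleR)
  also have "\<dots> \<le> Vopnorm m f" using Vnorm_le_Vopnorm[OF f w(1)] w by simp
  finally show ?thesis using t by (simp add: t_def field_simps)
qed

lemma Vopnorm_least:
  assumes "0 \<le> C" and bound: "\<And>v. v \<in> Vsp m \<Longrightarrow> Vnorm m (f v) \<le> C * Vnorm m v"
  shows "Vopnorm m f \<le> C"
  unfolding Vopnorm_def
proof (rule cSup_least)
  show "(\<lambda>v. Vnorm m (f v)) ` {v \<in> Vsp m. Vnorm m v \<le> 1} \<noteq> {}"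
    using zero_in_Vsp by force
next
  fix y assume "y \<in> (\<lambda>v. Vnorm m (f v)) ` {v \<in> Vsp m. Vnorm m v \<le> 1}"
  then obtain v where v: "v \<in> Vsp m" "Vnorm m v \<le> 1" "y = Vnorm m (f v)" by auto
  have "C * Vnorm m v \<le> C" using v \<open>0 \<le> C\<close> by (simp add: mult_left_le)
  then show "y \<le> C" using bound[OF v(1)] v(3) by simp
qed

lemma Vnorm_comp_le:
  assumes f: "bounded_linear_V m f" and g: "bounded_linear_V m g" and v: "v \<in> Vsp m"
  shows "Vnorm m ((g \<circ> f) v) \<le> (Vopnorm m g * Vopnorm m f) * Vnorm m v"
proof -
  have "Vnorm m (g (f v)) \<le> Vopnorm m g * Vnorm m (f v)"
    by (rule Vopnorm_bound[OF g bounded_linear_V_in_Vsp[OF f v]])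
  also have "\<dots> \<le> Vopnorm m g * (Vopnorm m f * Vnorm m v)"
    using Vopnorm_bound[OF f v] Vopnorm_nonneg[OF g] by (rule mult_left_mono)
  finally show ?thesis by (simp add: mult.assoc)
qed

lemma bounded_linear_V_comp:
  fixes f g :: "(nat \<Rightarrow> real^'d) \<Rightarrow> (nat \<Rightarrow> real^'d)"
  assumes f: "bounded_linear_V m f" and g: "bounded_linear_V m g"
  shows "bounded_linear_V m (g \<circ> f)"
  unfolding bounded_linear_V_def
proof (intro conjI ballI allI)
  fix v w :: "nat \<Rightarrow> real^'d" assume v: "v \<in> Vsp m" and w: "w \<in> Vsp m"
  show "(g \<circ> f) (\<lambda>i. v i + w i) = (\<lambda>i. (g \<circ> f) v i + (g \<circ> f) w i)"
    using bounded_linear_V_add[OF f v w] bounded_linear_V_add[OF g]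
      bounded_linear_V_in_Vsp[OF f v] bounded_linear_V_in_Vsp[OF f w] by simp
next
  fix c :: real and v :: "nat \<Rightarrow> real^'d" assume v: "v \<in> Vsp m"
  show "(g \<circ> f) (\<lambda>i. c *\<^sub>R v i) = (\<lambda>i. c *\<^sub>R (g \<circ> f) v i)"
    using bounded_linear_V_scaleR[OF f v] bounded_linear_V_scaleR[OF g bounded_linear_V_in_Vsp[OF f v]]
    by simp
next
  fix v :: "nat \<Rightarrow> real^'d" assume "v \<in> Vsp m"
  then show "(g \<circ> f) v \<in> Vsp m" by (simp add: bounded_linear_V_in_Vsp f g)
next
  show "\<exists>C. \<forall>v\<in>Vsp m. Vnorm m ((g \<circ> f) v) \<le> C * Vnorm m v"
    using Vnorm_comp_le[OF f g] by blast
qed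

lemma Vopnorm_comp_le:
  assumes "bounded_linear_V m f" "bounded_linear_V m g"
  shows "Vopnorm m (g \<circ> f) \<le> Vopnorm m g * Vopnorm m f"
proof (rule Vopnorm_least)
  show "0 \<le> Vopnorm m g * Vopnorm m f" using assms by (simp add: Vopnorm_nonneg)
qed (rule Vnorm_comp_le[OF assms])

lemma bounded_linear_V_nonzero_on_block:
  fixes f :: "(nat \<Rightarrow> real^'d) \<Rightarrow> (nat \<Rightarrow> real^'d)"
  assumes f: "bounded_linear_V m f" and v: "v \<in> Vsp m" and nonzero: "f v \<noteq> (\<lambda>_. 0)"
  obtains i u where "i \<le> 2*m-2" "u \<in> Vsub m i" "f u \<noteq> (\<lambda>_. 0)"
proof (rule ccontr)
  assume "\<not> thesis"
  then have blocks: "\<And>i u. i \<le> 2*m-2 \<Longrightarrow> u \<in> Vsub m i \<Longrightarrow> f u = (\<lambda>_. 0)"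
    using that by blast
  have "\<forall>v\<in>Vsp m. (\<forall>j\<ge>t. v j = 0) \<longrightarrow> f v = (\<lambda>_. 0)" for t
  proof (induction t)
    case 0
    then show ?case using bounded_linear_V_zero[OF f] by (auto simp: fun_eq_iff)
  next
    case (Suc t)
    show ?case
    proof (intro ballI impI)
      fix v :: "nat \<Rightarrow> real^'d" assume v: "v \<in> Vsp m" and vanish: "\<forall>j\<ge>Suc t. v j = 0"
      define v' where "v' = (\<lambda>i. if i = t then 0 else v i)"
      have v': "v' \<in> Vsp m" "f v' = (\<lambda>_. 0)" using Suc v vanish by (auto simp: v'_def Vsp_def)
      have t: "block t (v t) \<in> Vsp m" using v by (auto simp: block_def Vsp_def)
      have "f (block t (v t)) = (\<lambda>_. 0)"
      proof (cases "t \<le> 2*m-2")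
        case True
        then show ?thesis using blocks block_in_Vsub by blast
      next
        case False
        then have "block t (v t) = (\<lambda>_. 0)" using v by (auto simp: Vsp_def block_def)
        then show ?thesis using bounded_linear_V_zero[OF f] by simp
      qed
      moreover have "v = (\<lambda>i. v' i + block t (v t) i)" by (auto simp: v'_def block_def)
      ultimately show "f v = (\<lambda>_. 0)" using bounded_linear_V_add[OF f v'(1) t] v'(2) by simp
    qed
  qed
  moreover have "\<forall>j\<ge>Suc (2*m-2). v j = 0" using v by (auto simp: Vsp_def)
  ultimately show False using v nonzero by blast
qed

section \<open>The maps \<open>B0\<close> and \<open>B1\<close>\<close>

lemma mat_opnorm_bound: "norm (M *v u) \<le> mat_opnorm M * norm u"
  unfolding mat_opnorm_def using onorm[OF matrix_vector_mul_bounded_linear[of M]] by simp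

lemma mat_opnorm_nonneg: "0 \<le> mat_opnorm M"
  unfolding mat_opnorm_def using onorm_pos_le[OF matrix_vector_mul_bounded_linear[of M]] by simp

lemma mat_opnorm_mult: "mat_opnorm (X ** Y) \<le> mat_opnorm X * mat_opnorm Y"
proof -
  have "(\<lambda>v. (X ** Y) *v v) = (\<lambda>v. X *v v) \<circ> (\<lambda>v. Y *v v)"
    by (simp add: fun_eq_iff matrix_vector_mul_assoc)
  then show ?thesis unfolding mat_opnorm_def
    using onorm_compose[OF matrix_vector_mul_bounded_linear matrix_vector_mul_bounded_linear] by simp
qed

lemma mat_word_prod_append: "mat_word_prod A (u @ w) = mat_word_prod A u ** mat_word_prod A w"
  by (induction u) (simp_all add: mat_word_prod_def matrix_mul_assoc)

lemma bounded_linear_V_B0: "bounded_linear_V m (B0 m)"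
  unfolding bounded_linear_V_def
proof (intro conjI ballI allI)
  show "\<exists>C. \<forall>v\<in>Vsp m. Vnorm m (B0 m v :: nat \<Rightarrow> real^'d) \<le> C * Vnorm m v"
  proof (intro exI ballI)
    fix v :: "nat \<Rightarrow> real^'d"
    have "norm (B0 m v i) \<le> Vnorm m v" if "i \<le> 2*m-2" for i
      using norm_le_Vnorm[of "i+1" m v] Vnorm_nonneg[of m v] by (auto simp: B0_def)
    then show "Vnorm m (B0 m v) \<le> real (Suc (2*m-2)) * Vnorm m v" by (rule Vnorm_le_of_components)
  qed
qed (simp_all add: B0_def Vsp_def fun_eq_iff)

lemma bounded_linear_V_B1:
  fixes A :: "nat \<Rightarrow> real^'d^'d"
  shows "bounded_linear_V m (B1 m A)"
  unfolding bounded_linear_V_def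
proof (intro conjI ballI allI)
  define K where "K = (\<Sum>j\<le>m. mat_opnorm (A j))"
  have K: "mat_opnorm (A j) \<le> K" if "j \<le> m" for j
    unfolding K_def using that mat_opnorm_nonneg by (intro member_le_sum) auto
  show "\<exists>C. \<forall>v\<in>Vsp m. Vnorm m (B1 m A v) \<le> C * Vnorm m v"
  proof (intro exI ballI)
    fix v :: "nat \<Rightarrow> real^'d" assume v: "v \<in> Vsp m"
    have "norm (B1 m A v i) \<le> K * Vnorm m v" if "i \<le> 2*m-2" for i
    proof (cases "m - 1 \<le> i")
      case True
      define j where "j = i - (m-1)"
      have j: "j \<le> m" "j \<le> 2*m-2" using True that by (auto simp: j_def)
      have "norm (B1 m A v i) = norm (A j *v v j)" using True that by (simp add: B1_def j_def)
      also have "\<dots> \<le> mat_opnorm (A j) * norm (v j)" by (rule mat_opnorm_bound)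
      also have "\<dots> \<le> K * Vnorm m v"
        using j K[of j] norm_le_Vnorm[of j m v] mat_opnorm_nonneg[of "A j"] Vnorm_nonneg[of m v]
        by (auto intro!: mult_mono)
      finally show ?thesis .
    next
      case False
      then show ?thesis using K[of 0] mat_opnorm_nonneg[of "A 0"] Vnorm_nonneg[of m v]
        by (simp add: B1_def)
    qed
    then have "Vnorm m (B1 m A v) \<le> real (Suc (2*m-2)) * (K * Vnorm m v)"
      by (rule Vnorm_le_of_components)
    then show "Vnorm m (B1 m A v) \<le> (real (Suc (2*m-2)) * K) * Vnorm m v" by (simp add: mult.assoc)
  qed
qed (simp_all add: B1_def Vsp_def fun_eq_iff matrix_vector_right_distrib matrix_vector_mult_scaleR)

lemma bounded_linear_V_Bmap: "bounded_linear_V m (Bmap m A b)"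
  by (simp add: Bmap_def bounded_linear_V_B0 bounded_linear_V_B1)

lemma B_word_prod_Nil [simp]: "B_word_prod m A [] = id"
  by (simp add: B_word_prod_def)

lemma B_word_prod_Cons [simp]: "B_word_prod m A (b # w) = Bmap m A b \<circ> B_word_prod m A w"
  by (simp add: B_word_prod_def)

lemma B_word_prod_append: "B_word_prod m A (u @ w) = B_word_prod m A u \<circ> B_word_prod m A w"
  by (induction u) simp_all

lemma bounded_linear_V_B_word_prod: "bounded_linear_V m (B_word_prod m A w)"
proof (induction w)
  case Nil
  show ?case by (simp only: B_word_prod_Nil bounded_linear_V_id)
next
  case (Cons b w)
  show ?case by (simp only: B_word_prod_Cons) (rule bounded_linear_V_comp[OF Cons bounded_linear_V_Bmap])
qed

lemma bounded_linear_V_seq_prod: "bounded_linear_V m (seq_prod m A x n)"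
proof (induction n)
  case 0
  show ?case by (simp only: seq_prod.simps bounded_linear_V_id)
next
  case (Suc n)
  show ?case by (simp only: seq_prod.simps) (rule bounded_linear_V_comp[OF Suc bounded_linear_V_Bmap])
qed

lemma seq_prod_eq_B_word_prod: "seq_prod m A x n = B_word_prod m A (rev (map x [0..<n]))"
  by (induction n) (simp_all add: B_word_prod_append)

lemma seq_prod_add: "seq_prod m A x (n + k) = seq_prod m A (shiftk k x) n \<circ> seq_prod m A x k"
  by (induction n) (simp_all add: shiftk_def add.commute)

lemma B0_Vsub: "v \<in> Vsub m i \<Longrightarrow> B0 m v \<in> Vsub m (i - 1)"
  by (auto simp: Vsub_def Vsp_def B0_def)

lemma B0_Vsub_0: "v \<in> Vsub m 0 \<Longrightarrow> B0 m v = (\<lambda>_. 0)"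
  by (auto simp: Vsub_def Vsp_def B0_def fun_eq_iff)

lemma B1_Vsub: "v \<in> Vsub m i \<Longrightarrow> B1 m A v \<in> Vsub m (i + (m - 1))"
  by (auto simp: Vsub_def Vsp_def B1_def)

lemma B1_Vsub_ge:
  assumes "m \<ge> 1" "v \<in> Vsub m i" "m \<le> i"
  shows "B1 m A v = (\<lambda>_. 0)"
proof -
  have "v (j - (m-1)) = 0" if "j \<le> 2*m-2" for j
    using assms that by (auto simp: Vsub_def)
  then show ?thesis by (auto simp: B1_def fun_eq_iff)
qed

lemma B0_block: "1 \<le> i \<Longrightarrow> i \<le> 2*m-2 \<Longrightarrow> B0 m (block i u) = block (i - 1) u"
  by (auto simp: B0_def block_def fun_eq_iff)

lemma B0_funpow_block: "r \<le> i \<Longrightarrow> i \<le> 2*m-2 \<Longrightarrow> (B0 m ^^ r) (block i u) = block (i - r) u"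
  by (induction r) (simp_all add: B0_block)

lemma B1_block: "j \<le> m - 1 \<Longrightarrow> B1 m A (block j u) = block (j + (m-1)) (A j *v u)"
  by (auto simp: B1_def block_def fun_eq_iff)

lemma B_word_prod_replicate_False: "B_word_prod m A (replicate r False) = B0 m ^^ r"
  by (induction r) (simp_all add: Bmap_def funpow_Suc_right[symmetric])

section \<open>Comparison of the joint spectral radii\<close>

text \<open>The product \<open>B0^j B1 B0^(m-1-j)\<close> moves block \<open>m-1\<close> down to block \<open>j\<close>, applies \<open>A j\<close>
  while lifting it to block \<open>j+m-1\<close>, and shifts it back to block \<open>m-1\<close>. So on that block
  \<open>B\<close>-words simulate \<open>A\<close>-words, at the price of an \<open>m\<close>-fold dilation of length.\<close>

definition encode_letter :: "nat \<Rightarrow> nat \<Rightarrow> bool list" where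
  "encode_letter m j = replicate j False @ [True] @ replicate (m - 1 - j) False"

lemma B_word_prod_encode_letter:
  assumes "j < m"
  shows "B_word_prod m A (encode_letter m j) (block (m-1) u) = block (m-1) (A j *v u)"
proof -
  have "B_word_prod m A (encode_letter m j) = (B0 m ^^ j) \<circ> B1 m A \<circ> (B0 m ^^ (m - 1 - j))"
    by (simp add: encode_letter_def B_word_prod_append B_word_prod_replicate_False Bmap_def o_assoc)
  moreover have "(B0 m ^^ (m - 1 - j)) (block (m-1) u) = block j u"
    using assms B0_funpow_block[of "m-1-j" "m-1" m u] by simp
  moreover have "B1 m A (block j u) = block (j + (m-1)) (A j *v u)"
    using assms by (intro B1_block) simp
  moreover have "(B0 m ^^ j) (block (j + (m-1)) (A j *v u)) = block (m-1) (A j *v u)"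
    using assms B0_funpow_block[of j "j + (m-1)" m "A j *v u"] by simp
  ultimately show ?thesis by simp
qed

lemma B_word_prod_encode:
  assumes "set w \<subseteq> {..<m}"
  shows "B_word_prod m A (concat (map (encode_letter m) w)) (block (m-1) u)
    = block (m-1) (mat_word_prod A w *v u)"
  using assms
proof (induction w arbitrary: u)
  case Nil
  then show ?case by (simp add: mat_word_prod_def)
next
  case (Cons j w)
  have "B_word_prod m A (concat (map (encode_letter m) (j # w))) (block (m-1) u)
      = B_word_prod m A (encode_letter m j) (block (m-1) (mat_word_prod A w *v u))"
    using Cons by (simp add: B_word_prod_append)
  also have "\<dots> = block (m-1) (A j *v (mat_word_prod A w *v u))"
    using Cons by (intro B_word_prod_encode_letter) simp
  also have "\<dots> = block (m-1) (mat_word_prod A (j # w) *v u)"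
    by (simp add: mat_word_prod_def matrix_vector_mul_assoc)
  finally show ?case .
qed

lemma length_encode: "set w \<subseteq> {..<m} \<Longrightarrow> length (concat (map (encode_letter m) w)) = m * length w"
  by (induction w) (auto simp: encode_letter_def)

lemma word_max_A_le_word_max_B:
  fixes A :: "nat \<Rightarrow> real^'d^'d"
  assumes m: "m \<ge> 1"
  shows "word_max (\<lambda>w. mat_opnorm (mat_word_prod A w)) {..<m} n
    \<le> word_max (\<lambda>w. Vopnorm m (B_word_prod m A w)) UNIV (m * n)"
  unfolding word_max_def[of _ "{..<m}"]
proof (rule Max.boundedI)
  show "finite ((\<lambda>w. mat_opnorm (mat_word_prod A w)) ` {w. length w = n \<and> set w \<subseteq> {..<m}})"
    by (intro finite_imageI finite_words) simp
  show "(\<lambda>w. mat_opnorm (mat_word_prod A w)) ` {w. length w = n \<and> set w \<subseteq> {..<m}} \<noteq> {}"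
  proof -
    have "0 \<in> {..<m}" using m by simp
    then show ?thesis using replicate_in_words[of 0 "{..<m}" n] by blast
  qed
next
  fix y assume "y \<in> (\<lambda>w. mat_opnorm (mat_word_prod A w)) ` {w. length w = n \<and> set w \<subseteq> {..<m}}"
  then obtain w where w: "length w = n" "set w \<subseteq> {..<m}" "y = mat_opnorm (mat_word_prod A w)"
    by auto
  define W where "W = concat (map (encode_letter m) w)"
  have block: "m - 1 \<le> 2*m-2" using m by simp
  have "y \<le> Vopnorm m (B_word_prod m A W)"
    unfolding w(3) mat_opnorm_def
  proof (rule onorm_bound)
    show "0 \<le> Vopnorm m (B_word_prod m A W)" by (rule Vopnorm_nonneg[OF bounded_linear_V_B_word_prod])
    fix u :: "real^'d"
    have "norm (mat_word_prod A w *v u) = Vnorm m (B_word_prod m A W (block (m-1) u))"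
      using B_word_prod_encode[OF w(2), of A u] Vnorm_block[OF block, of "mat_word_prod A w *v u"]
      by (simp add: W_def)
    also have "\<dots> \<le> Vopnorm m (B_word_prod m A W) * Vnorm m (block (m-1) u)"
      by (rule Vopnorm_bound[OF bounded_linear_V_B_word_prod block_in_Vsp[OF block]])
    also have "\<dots> = Vopnorm m (B_word_prod m A W) * norm u"
      by (simp only: Vnorm_block[OF block])
    finally show "norm (mat_word_prod A w *v u) \<le> Vopnorm m (B_word_prod m A W) * norm u" .
  qed
  also have "\<dots> \<le> word_max (\<lambda>w. Vopnorm m (B_word_prod m A w)) UNIV (m * n)"
    using length_encode[OF w(2)] w(1) by (intro word_max_ge) (simp_all add: W_def)
  finally show "y \<le> word_max (\<lambda>w. Vopnorm m (B_word_prod m A w)) UNIV (m * n)" .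
qed

lemma jsr_mat_eq_lim:
  assumes "m \<ge> 1"
  shows "jsr_mat m A = lim (\<lambda>n. root n (word_max (\<lambda>w. mat_opnorm (mat_word_prod A w)) {..<m} n))"
proof -
  have "0 \<in> {..<m}" using assms by simp
  then have "{..<m} \<noteq> {}" by blast
  then show ?thesis by (simp add: jsr_mat_def Max_root_words)
qed

lemma jsr_B_eq_lim:
  "jsr_B m A = lim (\<lambda>n. root n (word_max (\<lambda>w. Vopnorm m (B_word_prod m A w)) UNIV n))"
  using Max_root_words[of "UNIV :: bool set"] by (simp add: jsr_B_def)

lemma tendsto_jsr_B:
  "(\<lambda>n. root n (word_max (\<lambda>w. Vopnorm m (B_word_prod m A w)) UNIV n)) \<longlonglongrightarrow> jsr_B m A"
  unfolding jsr_B_eq_lim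
  by (rule word_max_fekete(1))
    (simp_all add: Vopnorm_nonneg bounded_linear_V_B_word_prod B_word_prod_append Vopnorm_comp_le)

lemma jsr_B_pos:
  fixes A :: "nat \<Rightarrow> real^'d^'d"
  assumes m: "m \<ge> 1" and pos: "jsr_mat m A > 0"
  shows "jsr_B m A > 0"
proof -
  let ?MA = "word_max (\<lambda>w. mat_opnorm (mat_word_prod A w)) {..<m}"
  let ?MB = "word_max (\<lambda>w. Vopnorm m (B_word_prod m A w)) UNIV"
  have "0 \<in> {..<m}" using m by simp
  then have nonempty: "{..<m} \<noteq> {}" by blast
  have lower: "jsr_mat m A \<le> root n (?MA n)" if "n \<ge> 1" for n
    unfolding jsr_mat_eq_lim[OF m] using nonempty that
    by (intro word_max_fekete(2)) (auto simp: mat_opnorm_nonneg mat_word_prod_append mat_opnorm_mult)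
  have "strict_mono (\<lambda>n. m * (n + 1))" using m by (intro strict_monoI) simp
  from LIMSEQ_subseq_LIMSEQ[OF tendsto_jsr_B this]
  have "(\<lambda>n. root (m * (n + 1)) (?MB (m * (n + 1)))) \<longlonglongrightarrow> jsr_B m A" by (simp add: o_def)
  moreover have "root m (jsr_mat m A) \<le> root (m * (n + 1)) (?MB (m * (n + 1)))" for n
  proof -
    have "root m (jsr_mat m A) \<le> root m (root (n + 1) (?MA (n + 1)))"
      using m lower[of "n + 1"] by (intro real_root_le_mono) auto
    also have "\<dots> = root (m * (n + 1)) (?MA (n + 1))" by (rule real_root_mult_exp[symmetric])
    also have "\<dots> \<le> root (m * (n + 1)) (?MB (m * (n + 1)))"
      using m word_max_A_le_word_max_B[OF m, of A "n + 1"] by (intro real_root_le_mono) auto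
    finally show ?thesis .
  qed
  ultimately have "root m (jsr_mat m A) \<le> jsr_B m A" by (intro LIMSEQ_le_const) auto
  moreover have "root m (jsr_mat m A) > 0" using m pos by simp
  ultimately show ?thesis by linarith
qed

section \<open>Extremal sequences\<close>

lemma limsup_root_le_of_exponential_bound:
  fixes p :: "nat \<Rightarrow> real"
  assumes t: "t > 0" and K: "K > 0" and bound: "\<forall>\<^sub>F j in sequentially. p j \<le> t ^ j * K"
  shows "limsup (\<lambda>j. ereal (root j (p j))) \<le> ereal t"
proof -
  have "limsup (\<lambda>j. ereal (root j (p j))) \<le> limsup (\<lambda>j. ereal (t * root j K))"
  proof (rule Limsup_mono)
    show "\<forall>\<^sub>F j in sequentially. ereal (root j (p j)) \<le> ereal (t * root j K)"
      using bound eventually_ge_at_top[of 1]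
    proof eventually_elim
      case (elim j)
      then have "root j (p j) \<le> root j (t ^ j * K)" by (intro real_root_le_mono) auto
      also have "\<dots> = t * root j K" using elim t K by (simp add: real_root_mult real_root_power_cancel)
      finally show ?case by simp
    qed
  qed
  also have "\<dots> = ereal t"
    using tendsto_mult[OF tendsto_const LIMSEQ_root_const[OF K], of t]
    by (intro lim_imp_Limsup tendsto_ereal) simp_all
  finally show ?thesis .
qed

lemma limsup_root_shift_le:
  fixes p q :: "nat \<Rightarrow> real"
  assumes q_nonneg: "\<And>n. 0 \<le> q n" and c: "0 \<le> c" and shift: "\<And>n. p (n + k) \<le> q n * c"
  shows "limsup (\<lambda>n. ereal (root n (p n))) \<le> limsup (\<lambda>n. ereal (root n (q n)))"
proof (rule dense_ge)
  fix x assume "limsup (\<lambda>n. ereal (root n (q n))) < x"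
  then obtain t where t: "limsup (\<lambda>n. ereal (root n (q n))) < ereal t" and "ereal t < x"
    using ereal_dense2 by blast
  have "0 \<le> limsup (\<lambda>n. ereal (root n (q n)))"
    by (rule le_Limsup) (auto intro!: always_eventually real_root_ge_zero q_nonneg)
  from this t have "0 < ereal t" by (rule order.strict_trans1)
  then have t_pos: "t > 0" by simp
  obtain N where N: "\<And>n. n \<ge> N \<Longrightarrow> root n (q n) < t"
    using Limsup_lessD[OF t] unfolding eventually_sequentially by auto
  define K where "K = (c + 1) / t ^ k"
  have "\<forall>\<^sub>F j in sequentially. p j \<le> t ^ j * K"
    using eventually_ge_at_top[of "N + k + 1"]
  proof eventually_elim
    case (elim j)
    define n where "n = j - k"
    have n: "n \<ge> N" "n \<ge> 1" "j = n + k" using elim by (auto simp: n_def)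
    have "q n = root n (q n) ^ n" using n q_nonneg by (simp add: real_root_pow_pos2)
    also have "\<dots> \<le> t ^ n" using N[OF n(1)] q_nonneg by (intro power_mono) (auto intro: real_root_ge_zero)
    finally have "p j \<le> t ^ n * c" using shift[of n] c n(3) by (metis mult_right_mono order_trans)
    also have "\<dots> \<le> t ^ n * (c + 1)" using t_pos by simp
    also have "\<dots> = t ^ j * K" using t_pos by (simp add: K_def n(3) power_add)
    finally show ?case .
  qed
  moreover have "K > 0" using t_pos c by (simp add: K_def)
  ultimately have "limsup (\<lambda>n. ereal (root n (p n))) \<le> ereal t"
    by (intro limsup_root_le_of_exponential_bound[OF t_pos])
  with \<open>ereal t < x\<close> show "limsup (\<lambda>n. ereal (root n (p n))) \<le> x" by simp
qed

lemma very_weakly_extremal_B_shiftk: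
  assumes "very_weakly_extremal_B m A x"
  shows "very_weakly_extremal_B m A (shiftk k x)"
proof -
  let ?Q = "\<lambda>n. Vopnorm m (seq_prod m A (shiftk k x) n)"
  let ?MB = "word_max (\<lambda>w. Vopnorm m (B_word_prod m A w)) UNIV"
  have "limsup (\<lambda>n. ereal (root n (?Q n))) \<le> limsup (\<lambda>n. ereal (root n (?MB n)))"
  proof (intro Limsup_mono always_eventually allI)
    fix n
    have "?Q n \<le> ?MB n" unfolding seq_prod_eq_B_word_prod by (intro word_max_ge) simp_all
    then show "ereal (root n (?Q n)) \<le> ereal (root n (?MB n))"
      by (cases "n = 0") (auto intro: real_root_le_mono)
  qed
  also have "\<dots> = ereal (jsr_B m A)"
    by (intro lim_imp_Limsup tendsto_ereal tendsto_jsr_B) simp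
  finally have upper: "limsup (\<lambda>n. ereal (root n (?Q n))) \<le> ereal (jsr_B m A)" .
  have "ereal (jsr_B m A) = limsup (\<lambda>n. ereal (root n (Vopnorm m (seq_prod m A x n))))"
    using assms by (simp add: very_weakly_extremal_B_def)
  also have "\<dots> \<le> limsup (\<lambda>n. ereal (root n (?Q n)))"
  proof (rule limsup_root_shift_le)
    fix n
    show "Vopnorm m (seq_prod m A x (n + k)) \<le> ?Q n * Vopnorm m (seq_prod m A x k)"
      unfolding seq_prod_add by (intro Vopnorm_comp_le bounded_linear_V_seq_prod)
  qed (simp_all add: Vopnorm_nonneg bounded_linear_V_seq_prod)
  finally show ?thesis using upper by (simp add: very_weakly_extremal_B_def)
qed

lemma Vopnorm_seq_prod_pos:
  assumes "very_weakly_extremal_B m A x" and "jsr_B m A > 0"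
  shows "Vopnorm m (seq_prod m A x n) > 0"
proof (rule ccontr)
  let ?P = "\<lambda>j. Vopnorm m (seq_prod m A x j)"
  assume "\<not> ?P n > 0"
  then have "?P n = 0" using Vopnorm_nonneg[OF bounded_linear_V_seq_prod, of m A x n] by linarith
  have "?P (j + n) = 0" for j
  proof -
    have "?P (j + n) \<le> Vopnorm m (seq_prod m A (shiftk n x) j) * ?P n"
      unfolding seq_prod_add by (intro Vopnorm_comp_le bounded_linear_V_seq_prod)
    then show ?thesis
      using \<open>?P n = 0\<close> Vopnorm_nonneg[OF bounded_linear_V_seq_prod, of m A x "j + n"] by simp
  qed
  then have "\<forall>\<^sub>F j in sequentially. ereal (root j (?P j)) \<le> 0"
    unfolding eventually_sequentially by (metis le_add_diff_inverse2 order.refl real_root_zero zero_ereal_def)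
  then have "limsup (\<lambda>j. ereal (root j (?P j))) \<le> 0" by (rule Limsup_bounded)
  with assms show False by (simp add: very_weakly_extremal_B_def)
qed

lemma common_element_of_decreasing_sets:
  fixes S :: "nat \<Rightarrow> 'a set"
  assumes "finite F" and "\<And>n. S n \<subseteq> F" and "\<And>n. S n \<noteq> {}"
    and "decseq S"
  shows "\<exists>i. \<forall>n. i \<in> S n"
proof (rule ccontr)
  assume "\<not> ?thesis"
  then obtain g :: "'a \<Rightarrow> nat" where g: "\<And>i. i \<notin> S (g i)" by metis
  define N where "N = (\<Sum>i\<in>F. g i)"
  obtain i where i: "i \<in> S N" using assms(3) by blast
  then have "g i \<le> N" unfolding N_def using assms(1,2) by (intro member_le_sum) auto
  then show False using decseqD[OF \<open>decseq S\<close>] i g by blast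
qed

lemma persistent_block:
  assumes pos: "\<And>n. Vopnorm m (seq_prod m A x n) > 0"
  obtains i where "\<And>n. \<exists>u\<in>Vsub m i. seq_prod m A x n u \<noteq> (\<lambda>_. 0)"
proof -
  define S where "S n = {i. i \<le> 2*m-2 \<and> (\<exists>u\<in>Vsub m i. seq_prod m A x n u \<noteq> (\<lambda>_. 0))}" for n
  have bounded: "S n \<subseteq> {..2*m-2}" for n by (auto simp: S_def)
  have nonempty: "S n \<noteq> {}" for n
  proof -
    have "\<exists>v\<in>Vsp m. seq_prod m A x n v \<noteq> (\<lambda>_. 0)"
    proof (rule ccontr)
      assume "\<not> ?thesis"
      then have "Vopnorm m (seq_prod m A x n) \<le> 0" by (intro Vopnorm_least) auto
      with pos[of n] show False by simp
    qed
    then obtain v where v: "v \<in> Vsp m" "seq_prod m A x n v \<noteq> (\<lambda>_. 0)" by blast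
    then obtain i u where "i \<le> 2*m-2" "u \<in> Vsub m i" "seq_prod m A x n u \<noteq> (\<lambda>_. 0)"
      by (rule bounded_linear_V_nonzero_on_block[OF bounded_linear_V_seq_prod])
    then show ?thesis unfolding S_def by blast
  qed
  have "S n' \<subseteq> S n" if "n \<le> n'" for n n'
  proof
    fix i assume "i \<in> S n'"
    then obtain u where u: "i \<le> 2*m-2" "u \<in> Vsub m i" "seq_prod m A x n' u \<noteq> (\<lambda>_. 0)"
      by (auto simp: S_def)
    have "seq_prod m A x n' = seq_prod m A (shiftk n x) (n' - n) \<circ> seq_prod m A x n"
      using seq_prod_add[of m A x "n' - n" n] that by simp
    then have "seq_prod m A x n u \<noteq> (\<lambda>_. 0)"
      using u bounded_linear_V_zero[OF bounded_linear_V_seq_prod[of m A "shiftk n x" "n' - n"]] by auto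
    then show "i \<in> S n" using u by (auto simp: S_def)
  qed
  then have "decseq S" unfolding decseq_def by blast
  obtain i where i: "\<And>n. i \<in> S n"
    using common_element_of_decreasing_sets[OF finite_atMost bounded nonempty \<open>decseq S\<close>] by blast
  show ?thesis
  proof (rule that)
    show "\<exists>u\<in>Vsub m i. seq_prod m A x n u \<noteq> (\<lambda>_. 0)" for n using i[of n] by (simp add: S_def)
  qed
qed

fun block_index :: "nat \<Rightarrow> (nat \<Rightarrow> bool) \<Rightarrow> nat \<Rightarrow> nat \<Rightarrow> nat" where
  "block_index m x i 0 = i"
| "block_index m x i (Suc n) = (if x n then block_index m x i n + (m - 1) else block_index m x i n - 1)"

lemma seq_prod_Vsub_block_index:
  "u \<in> Vsub m i \<Longrightarrow> seq_prod m A x n u \<in> Vsub m (block_index m x i n)"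
  by (induction n) (auto simp: Bmap_def intro: B0_Vsub[simplified] B1_Vsub[simplified])

text \<open>A \<open>B0\<close>-step never starts at index \<open>0\<close>, so some \<open>B1\<close>-step occurs and lifts the index to
  at least \<open>m-1\<close>; from there it moves down in unit steps until the next \<open>B1\<close>-step, which
  requires an index below \<open>m\<close>.\<close>

lemma block_index_hits:
  assumes admissible: "\<And>n. (x n \<longrightarrow> block_index m x i n < m) \<and> (\<not> x n \<longrightarrow> block_index m x i n \<ge> 1)"
  shows "\<exists>k. block_index m x i k = m - 1"
proof -
  have "\<exists>n. x n"
  proof (rule ccontr)
    assume "\<not> (\<exists>n. x n)"
    then have "block_index m x i n = i - n" for n by (induction n) simp_all
    with admissible[of i] \<open>\<not> (\<exists>n. x n)\<close> show False by simp
  qed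
  then obtain n where "x n" by blast
  have descend: "block_index m x i a = m - 1 + d \<Longrightarrow> \<exists>k. block_index m x i k = m - 1" for a d
  proof (induction d arbitrary: a)
    case 0
    then show ?case by auto
  next
    case (Suc d)
    then have "\<not> x a" using admissible[of a] by auto
    then have "block_index m x i (Suc a) = m - 1 + d" using Suc.prems by simp
    then show ?case by (rule Suc.IH)
  qed
  have "block_index m x i (Suc n) = m - 1 + block_index m x i n" using \<open>x n\<close> by simp
  then show ?thesis by (rule descend)
qed

lemma persistent_block_reaches_middle:
  assumes m: "m \<ge> 1" and persistent: "\<And>n. \<exists>u\<in>Vsub m i. seq_prod m A x n u \<noteq> (\<lambda>_. 0)"
  shows "\<exists>k. block_index m x i k = m - 1"
proof (rule block_index_hits)
  fix n
  obtain u where u: "u \<in> Vsub m i" "seq_prod m A x (Suc n) u \<noteq> (\<lambda>_. 0)" using persistent by blast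
  have in_block: "seq_prod m A x n u \<in> Vsub m (block_index m x i n)"
    by (rule seq_prod_Vsub_block_index[OF u(1)])
  have nonzero: "Bmap m A (x n) (seq_prod m A x n u) \<noteq> (\<lambda>_. 0)" using u(2) by simp
  have "block_index m x i n < m" if "x n"
    using B1_Vsub_ge[OF m in_block, of A] nonzero that by (force simp: Bmap_def)
  moreover have "block_index m x i n \<noteq> 0" if "\<not> x n"
    using B0_Vsub_0[of _ m] in_block nonzero that by (force simp: Bmap_def)
  ultimately show "(x n \<longrightarrow> block_index m x i n < m) \<and> (\<not> x n \<longrightarrow> block_index m x i n \<ge> 1)"
    by auto
qed

lemma seq_prod_shiftk_Vsub_nonzero:
  assumes persistent: "\<And>n. \<exists>u\<in>Vsub m i. seq_prod m A x n u \<noteq> (\<lambda>_. 0)"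
  shows "seq_prod m A (shiftk k x) n ` Vsub m (block_index m x i k) \<noteq> {(\<lambda>_. 0)}"
proof
  assume vanish: "seq_prod m A (shiftk k x) n ` Vsub m (block_index m x i k) = {(\<lambda>_. 0)}"
  obtain u where u: "u \<in> Vsub m i" "seq_prod m A x (n + k) u \<noteq> (\<lambda>_. 0)" using persistent by blast
  have "seq_prod m A x k u \<in> Vsub m (block_index m x i k)" by (rule seq_prod_Vsub_block_index[OF u(1)])
  with vanish have "seq_prod m A (shiftk k x) n (seq_prod m A x k u) = (\<lambda>_. 0)" by blast
  with u(2) show False by (simp add: seq_prod_add)
qed

theorem lemma6:
  fixes m :: nat and A :: "nat \<Rightarrow> real^'d^'d" and x :: "nat \<Rightarrow> bool"
  assumes "m \<ge> 1"
    and "jsr_mat m A > 0"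
    and "very_weakly_extremal_B m A x"
  shows "\<exists>k::nat. very_weakly_extremal_B m A (shiftk k x) \<and>
           (\<forall>n\<ge>1. seq_prod m A (shiftk k x) n ` Vsub m (m - 1) \<noteq> {(\<lambda>_. 0)})"
proof -
  have "jsr_B m A > 0" using assms(1,2) by (rule jsr_B_pos)
  with assms(3) have "\<And>n. Vopnorm m (seq_prod m A x n) > 0" by (rule Vopnorm_seq_prod_pos)
  then obtain i where persistent: "\<And>n. \<exists>u\<in>Vsub m i. seq_prod m A x n u \<noteq> (\<lambda>_. 0)"
    using persistent_block[of m A x] by blast
  obtain k where "block_index m x i k = m - 1"
    using persistent_block_reaches_middle[OF assms(1) persistent] by blast
  then show ?thesis
    using very_weakly_extremal_B_shiftk[OF assms(3)] seq_prod_shiftk_Vsub_nonzero[OF persistent]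
    by metis
qed

end
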